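(* Let $(S,M)$ be a surface with marked points and empty boundary, and let $T$ be an ideal triangulation of $(S,M)$ such that at each puncture there are at least three incident arcs of $T$ (an arc with both ends at the same puncture counted twice). Let $Q$ be the adjacency quiver of $T$ and let $f,g:Q_1\to Q_1$ be the maps defined below. Then: (a) the $f$-orbits on $Q_1$ all have size $3$, and they are in one-to-one correspondence with the triangles of $T$; (b) the $g$-orbits on $Q_1$ all have size at least $3$, and they are in one-to-one correspondence with the punctures.
   Context: $(S,M)$: $S$ compact, connected, oriented surface without boundary, $M$ a finite non-empty set of punctures. The adjacency quiver $Q$ has the arcs of $T$ as vertices and an arrow $i\to j$ for each puncture $p$ and each occurrence of arcs $i,j$ incident to $p$ with $j$ immediately following $i$ in counterclockwise order around $p$; such an arrow corresponds to a corner at $p$ of a triangle of $T$ with sides $i$ and $j$. For an arrow $\alpha:i\to j$ at puncture $p$, let $q$ be the puncture at the other end of $j$ (the end of $j$ not used by this corner) and $k$ the third side of that triangle, which follows $j$ counterclockwise around $q$; define $f(\alpha)$ to be the arrow $j\to k$ at $q$. Define $g(\alpha)$ to be the arrow $j\to \ell$ at $p$, where $\ell$ is the arc immediately following $j$ in counterclockwise order around $p$. The $f$-orbit (resp. $g$-orbit) of $\alpha$ is $\{f^m(\alpha):m\in\mathbb{Z}\}$ (resp. $\{g^m(\alpha):m\in\mathbb{Z}\}$). *)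

theory Defs
  imports Main
begin

text \<open>
Combinatorial model of an ideal triangulation T of a punctured surface (S,M)
with empty boundary.  The triangles of T are cut apart; every triangle has three
sides, each oriented as part of the counterclockwise boundary of its triangle.
These oriented sides ("darts") form the finite set D.
  nxt x : the next side of the same triangle, in counterclockwise order
          (it starts where x ends);
  opp x : the side of the (possibly same) triangle glued to x along the arc
          of x, with opposite orientation.
Gluing the triangles along opp gives a compact oriented surface without boundary;
its vertices are the punctures M.  Connectedness of S is connectedness of the gluing.
The dart x also names the corner of its triangle at the endpoint (head) of x,
which lies between the sides x and nxt x.
\<close>

definition ideal_triangulation :: "'d set \<Rightarrow> ('d \<Rightarrow> 'd) \<Rightarrow> ('d \<Rightarrow> 'd) \<Rightarrow> bool" where
  "ideal_triangulation D nxt opp \<longleftrightarrow>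
     finite D \<and> D \<noteq> {} \<and>
     (\<forall>x\<in>D. nxt x \<in> D \<and> nxt x \<noteq> x \<and> nxt (nxt (nxt x)) = x) \<and>
     (\<forall>x\<in>D. opp x \<in> D \<and> opp x \<noteq> x \<and> opp (opp x) = x) \<and>
     (\<forall>x\<in>D. \<forall>y\<in>D. (x, y) \<in> ({(u, nxt u) | u. u \<in> D} \<union> {(u, opp u) | u. u \<in> D})\<^sup>*)"

definition arc_of :: "('d \<Rightarrow> 'd) \<Rightarrow> 'd \<Rightarrow> 'd set" where
  "arc_of opp x = {x, opp x}"

definition arcs :: "'d set \<Rightarrow> ('d \<Rightarrow> 'd) \<Rightarrow> 'd set set" where
  "arcs D opp = arc_of opp ` D"

definition tri_rel :: "'d set \<Rightarrow> ('d \<Rightarrow> 'd) \<Rightarrow> ('d \<times> 'd) set" where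
  "tri_rel D nxt = ({(u, nxt u) | u. u \<in> D} \<union> {(nxt u, u) | u. u \<in> D})\<^sup>*"

definition triangles :: "'d set \<Rightarrow> ('d \<Rightarrow> 'd) \<Rightarrow> 'd set set" where
  "triangles D nxt = (\<lambda>x. tri_rel D nxt `` {x}) ` D"

text \<open>Punctures: the end point (head) of dart x is identified by the gluing with the
  start point of opp x, i.e. with the head of the side nxt (nxt (opp x)) that precedes
  opp x in its triangle.  A puncture is an equivalence class of darts under the
  identification of their heads; puncture_of x is the puncture at the head of x
  (the puncture of the corner x).\<close>
definition vert_rel :: "'d set \<Rightarrow> ('d \<Rightarrow> 'd) \<Rightarrow> ('d \<Rightarrow> 'd) \<Rightarrow> ('d \<times> 'd) set" where
  "vert_rel D nxt opp =
     ({(u, nxt (nxt (opp u))) | u. u \<in> D} \<union> {(nxt (nxt (opp u)), u) | u. u \<in> D})\<^sup>*"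

definition puncture_of :: "'d set \<Rightarrow> ('d \<Rightarrow> 'd) \<Rightarrow> ('d \<Rightarrow> 'd) \<Rightarrow> 'd \<Rightarrow> 'd set" where
  "puncture_of D nxt opp x = vert_rel D nxt opp `` {x}"

definition punctures :: "'d set \<Rightarrow> ('d \<Rightarrow> 'd) \<Rightarrow> ('d \<Rightarrow> 'd) \<Rightarrow> 'd set set" where
  "punctures D nxt opp = puncture_of D nxt opp ` D"

text \<open>Number of arcs incident to puncture p, an arc with both ends at p counted twice:
  the arc ends are the darts (the arc {x, opp x} has its ends at the heads of x and
  of opp x).\<close>
definition incident_count :: "'d set \<Rightarrow> ('d \<Rightarrow> 'd) \<Rightarrow> ('d \<Rightarrow> 'd) \<Rightarrow> 'd set \<Rightarrow> nat" where
  "incident_count D nxt opp p = card {x \<in> D. puncture_of D nxt opp x = p}"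

text \<open>Adjacency quiver Q: vertices are the arcs, arrows Q_1 are the corners, i.e. D.
  The corner x lies at puncture head x between the sides x and nxt x; going
  counterclockwise around that puncture inside the triangle one passes from the arc
  of nxt x to the arc of x, so the arrow x goes from arc(nxt x) to arc(x).\<close>
definition Q1 :: "'d set \<Rightarrow> 'd set" where "Q1 D = D"
definition arr_src :: "('d \<Rightarrow> 'd) \<Rightarrow> ('d \<Rightarrow> 'd) \<Rightarrow> 'd \<Rightarrow> 'd set" where
  "arr_src nxt opp x = arc_of opp (nxt x)"
definition arr_tgt :: "('d \<Rightarrow> 'd) \<Rightarrow> 'd \<Rightarrow> 'd set" where
  "arr_tgt opp x = arc_of opp x"

text \<open>f(alpha) for alpha : i -> j at p (corner x, j = arc of x): the other end q of j
  (in the triangle of alpha) is the start of x, i.e. the head of nxt (nxt x); the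
  corner of the same triangle at q lies between the sides nxt (nxt x) and x and is the
  arrow j -> k, k the third side.\<close>
definition f_map :: "('d \<Rightarrow> 'd) \<Rightarrow> 'd \<Rightarrow> 'd" where
  "f_map nxt x = nxt (nxt x)"

text \<open>g(alpha) for alpha : i -> j at p: crossing the arc j counterclockwise around p
  one enters the triangle of opp x; its corner at p lies between the sides
  nxt (nxt (opp x)) (ending at p) and opp x, and is the arrow j -> l at p.\<close>
definition g_map :: "('d \<Rightarrow> 'd) \<Rightarrow> ('d \<Rightarrow> 'd) \<Rightarrow> 'd \<Rightarrow> 'd" where
  "g_map nxt opp x = nxt (nxt (opp x))"

definition zpow :: "'d set \<Rightarrow> ('d \<Rightarrow> 'd) \<Rightarrow> int \<Rightarrow> 'd \<Rightarrow> 'd" where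
  "zpow D h m = (if 0 \<le> m then h ^^ nat m else inv_into D h ^^ nat (- m))"

definition orbit :: "'d set \<Rightarrow> ('d \<Rightarrow> 'd) \<Rightarrow> 'd \<Rightarrow> 'd set" where
  "orbit D h a = {zpow D h m a | m. True}"

end

theory Submission
  imports Defs
begin

text \<open>The maps nxt, f = nxt\<circ>nxt and g = nxt\<circ>nxt\<circ>opp are permutations of the corners D,
  and the orbits of a permutation h of D are exactly the classes of the equivalence
  relation generated by u \<sim> h u.  Triangles and punctures are, by definition, such classes
  for h = nxt and h = g.  Since nxt has order 3 and no fixed points, the classes of nxt
  (which are also those of f = nxt\<inverse>) have three elements; the g-class of a corner is the
  set of arc ends at its puncture, so its size is the degree of that puncture.\<close>

definition gen_equiv :: "'d set \<Rightarrow> ('d \<Rightarrow> 'd) \<Rightarrow> ('d \<times> 'd) set" where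
  "gen_equiv D h = ({(u, h u) | u. u \<in> D} \<union> {(h u, u) | u. u \<in> D})\<^sup>*"

lemma sym_gen_equiv: "sym (gen_equiv D h)"
  unfolding gen_equiv_def by (rule sym_rtrancl) (auto simp: sym_def)

lemma trans_gen_equiv: "trans (gen_equiv D h)"
  unfolding gen_equiv_def by (rule trans_rtrancl)

lemma gen_equiv_refl: "(x, x) \<in> gen_equiv D h"
  by (simp add: gen_equiv_def)

lemma gen_equiv_step: "u \<in> D \<Longrightarrow> (u, h u) \<in> gen_equiv D h"
  unfolding gen_equiv_def by (rule r_into_rtrancl) blast

lemma gen_equiv_step_converse: "u \<in> D \<Longrightarrow> (h u, u) \<in> gen_equiv D h"
  unfolding gen_equiv_def by (rule r_into_rtrancl) blast

lemma gen_equiv_trans: "(a, b) \<in> gen_equiv D h \<Longrightarrow> (b, c) \<in> gen_equiv D h \<Longrightarrow> (a, c) \<in> gen_equiv D h"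
  using trans_gen_equiv by (rule transD)

lemma gen_equiv_class_eq: "(a, b) \<in> gen_equiv D h \<Longrightarrow> gen_equiv D h `` {a} = gen_equiv D h `` {b}"
  using sym_gen_equiv trans_gen_equiv by (fastforce dest: symD transD)

lemma gen_equiv_class_subset:
  assumes "h ` D \<subseteq> D" "a \<in> D"
  shows "gen_equiv D h `` {a} \<subseteq> D"
proof
  fix y assume "y \<in> gen_equiv D h `` {a}"
  then have "(a, y) \<in> ({(u, h u) | u. u \<in> D} \<union> {(h u, u) | u. u \<in> D})\<^sup>*"
    by (simp add: gen_equiv_def)
  then show "y \<in> D"
    by (induction rule: rtrancl_induct) (use assms in auto)
qed

lemma gen_equiv_fiber_eq_class:
  assumes "h ` D \<subseteq> D" "a \<in> D"
  shows "{x \<in> D. gen_equiv D h `` {x} = gen_equiv D h `` {a}} = gen_equiv D h `` {a}"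
proof -
  have "x \<in> gen_equiv D h `` {x}" for x
    by (simp add: gen_equiv_refl)
  moreover have "gen_equiv D h `` {x} = gen_equiv D h `` {a}" if "x \<in> gen_equiv D h `` {a}" for x
    using that gen_equiv_class_eq by fastforce
  ultimately show ?thesis
    using gen_equiv_class_subset[OF assms] by blast
qed

lemma gen_equiv_class_order3:
  assumes h: "\<forall>y\<in>D. h y \<in> D \<and> h (h (h y)) = y" and x: "x \<in> D"
  shows "gen_equiv D h `` {x} = {x, h x, h (h x)}"
proof
  have "(x, h x) \<in> gen_equiv D h"
    using gen_equiv_step x .
  moreover have "(h x, h (h x)) \<in> gen_equiv D h"
    using h x by (simp add: gen_equiv_step)
  ultimately have "(x, h (h x)) \<in> gen_equiv D h"
    by (rule gen_equiv_trans)
  with \<open>(x, h x) \<in> gen_equiv D h\<close> show "{x, h x, h (h x)} \<subseteq> gen_equiv D h `` {x}"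
    using gen_equiv_refl by simp
  have x3: "h (h (h x)) = x"
    using h x by simp
  show "gen_equiv D h `` {x} \<subseteq> {x, h x, h (h x)}"
  proof
    fix y assume "y \<in> gen_equiv D h `` {x}"
    then have "(x, y) \<in> ({(u, h u) | u. u \<in> D} \<union> {(h u, u) | u. u \<in> D})\<^sup>*"
      by (simp add: gen_equiv_def)
    then show "y \<in> {x, h x, h (h x)}"
    proof (induction rule: rtrancl_induct)
      case (step y z)
      then consider "z = h y" | "y = h z" "z \<in> D"
        by blast
      then show ?case
      proof cases
        case 1
        then show ?thesis using step.IH x3 by auto
      next
        case 2
        then have "z = h (h y)" using h by simp
        then show ?thesis using step.IH x3 by auto
      qed
    qed simp
  qed
qed

lemma card_order3_orbit:
  assumes "h x \<noteq> x" "h (h (h x)) = x"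
  shows "card {x, h x, h (h x)} = 3"
proof -
  have "h (h x) \<noteq> x"
    using assms by metis
  moreover have "h (h x) \<noteq> h x"
    using assms by metis
  ultimately show ?thesis
    using assms by simp
qed

lemma funpow_closed: "h ` D \<subseteq> D \<Longrightarrow> x \<in> D \<Longrightarrow> (h ^^ n) x \<in> D"
  by (induction n) auto

lemma zpow_closed:
  assumes "bij_betw h D D" "x \<in> D"
  shows "zpow D h m x \<in> D"
proof -
  have "inv_into D h ` D \<subseteq> D"
    using assms(1) by (simp add: bij_betw_def image_subsetI inv_into_into)
  then show ?thesis
    using assms funpow_closed[of h D] bij_betw_imp_surj_on[OF assms(1)]
    by (simp add: zpow_def funpow_closed)
qed

lemma zpow_add_one:
  assumes b: "bij_betw h D D" and x: "x \<in> D"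
  shows "zpow D h (m + 1) x = h (zpow D h m x)"
proof (cases "0 \<le> m")
  case True
  then have "nat (m + 1) = Suc (nat m)" by simp
  then show ?thesis using True by (simp add: zpow_def)
next
  case False
  define y where "y = (inv_into D h ^^ nat (- m - 1)) x"
  have "nat (- m) = Suc (nat (- m - 1))"
    using False by arith
  then have "zpow D h m x = inv_into D h y"
    using False by (simp add: zpow_def y_def)
  moreover have "zpow D h (m + 1) x = y"
    using False by (auto simp: zpow_def y_def)
  moreover have "y \<in> D"
    using b x by (simp add: y_def funpow_closed bij_betw_def inv_into_into image_subsetI)
  ultimately show ?thesis
    using b by (metis f_inv_into_f bij_betw_imp_surj_on)
qed

lemma zpow_diff_one:
  assumes b: "bij_betw h D D" and x: "x \<in> D"
  shows "zpow D h (m - 1) x = inv_into D h (zpow D h m x)"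
proof -
  have "zpow D h m x = h (zpow D h (m - 1) x)"
    using zpow_add_one[OF b x, of "m - 1"] by simp
  moreover have "zpow D h (m - 1) x \<in> D"
    using zpow_closed[OF b x] .
  ultimately show ?thesis
    using b by (simp add: bij_betw_imp_inj_on inv_into_f_f)
qed

lemma orbit_eq_gen_equiv_class:
  assumes b: "bij_betw h D D" and x: "x \<in> D"
  shows "orbit D h x = gen_equiv D h `` {x}"
proof
  show "orbit D h x \<subseteq> gen_equiv D h `` {x}"
  proof
    fix y assume "y \<in> orbit D h x"
    then obtain m where y: "y = zpow D h m x" by (auto simp: orbit_def)
    have "(x, zpow D h m x) \<in> gen_equiv D h"
    proof (induction m rule: int_induct[of _ 0])
      case base
      show ?case by (simp add: zpow_def gen_equiv_refl)
    next
      case (step1 i)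
      have "(zpow D h i x, h (zpow D h i x)) \<in> gen_equiv D h"
        using gen_equiv_step zpow_closed[OF b x] .
      then show ?case
        using gen_equiv_trans[OF step1(2)] zpow_add_one[OF b x] by simp
    next
      case (step2 i)
      let ?z = "zpow D h i x"
      have "inv_into D h ?z \<in> D" "h (inv_into D h ?z) = ?z"
        using zpow_closed[OF b x] b
        by (auto simp: bij_betw_def inv_into_into f_inv_into_f)
      then have "(?z, inv_into D h ?z) \<in> gen_equiv D h"
        using gen_equiv_step_converse[of "inv_into D h ?z" D h] by simp
      then show ?case
        using gen_equiv_trans[OF step2(2)] zpow_diff_one[OF b x] by simp
    qed
    then show "y \<in> gen_equiv D h `` {x}" using y by simp
  qed
next
  show "gen_equiv D h `` {x} \<subseteq> orbit D h x"
  proof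
    fix y assume "y \<in> gen_equiv D h `` {x}"
    then have "(x, y) \<in> ({(u, h u) | u. u \<in> D} \<union> {(h u, u) | u. u \<in> D})\<^sup>*"
      by (simp add: gen_equiv_def)
    then show "y \<in> orbit D h x"
    proof (induction rule: rtrancl_induct)
      case base
      have "x = zpow D h 0 x" by (simp add: zpow_def)
      then show ?case unfolding orbit_def by blast
    next
      case (step y z)
      from step.IH obtain m where m: "y = zpow D h m x" by (auto simp: orbit_def)
      from step.hyps(2) consider "z = h y" | u where "y = h u" "z = u" "u \<in> D"
        by blast
      then have "z = zpow D h (m + 1) x \<or> z = zpow D h (m - 1) x"
      proof cases
        case 1
        then show ?thesis using zpow_add_one[OF b x, of m] m by simp
      next
        case 2
        then have "z = inv_into D h y"
          using b by (simp add: bij_betw_imp_inj_on inv_into_f_f)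
        then show ?thesis using zpow_diff_one[OF b x, of m] m by simp
      qed
      then show ?case unfolding orbit_def by blast
    qed
  qed
qed

lemma ideal_triangulation_nxt:
  "ideal_triangulation D nxt opp \<Longrightarrow> \<forall>x\<in>D. nxt x \<in> D \<and> nxt x \<noteq> x \<and> nxt (nxt (nxt x)) = x"
  by (simp add: ideal_triangulation_def)

lemma ideal_triangulation_opp:
  "ideal_triangulation D nxt opp \<Longrightarrow> \<forall>x\<in>D. opp x \<in> D \<and> opp (opp x) = x"
  by (simp add: ideal_triangulation_def)

lemma tri_rel_eq_gen_equiv: "tri_rel D nxt = gen_equiv D nxt"
  by (simp add: tri_rel_def gen_equiv_def)

lemma puncture_of_eq_gen_equiv_class: "puncture_of D nxt opp x = gen_equiv D (g_map nxt opp) `` {x}"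
  by (simp add: puncture_of_def vert_rel_def gen_equiv_def g_map_def)

lemma f_orbit_eq_triangle:
  assumes T: "ideal_triangulation D nxt opp" and x: "x \<in> D"
  shows "orbit D (f_map nxt) x = tri_rel D nxt `` {x}"
    and "tri_rel D nxt `` {x} = {x, nxt x, nxt (nxt x)}"
proof -
  note N = ideal_triangulation_nxt[OF T]
  have F: "\<forall>y\<in>D. f_map nxt y \<in> D \<and> f_map nxt (f_map nxt (f_map nxt y)) = y"
    using N by (simp add: f_map_def)
  have "bij_betw (f_map nxt) D D"
    by (rule bij_betw_byWitness[where f' = nxt]) (use N in \<open>auto simp: f_map_def\<close>)
  then have "orbit D (f_map nxt) x = {x, f_map nxt x, f_map nxt (f_map nxt x)}"
    using orbit_eq_gen_equiv_class[OF _ x] gen_equiv_class_order3[OF F x] by simp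
  then have "orbit D (f_map nxt) x = {x, nxt (nxt x), nxt x}"
    using N x by (simp add: f_map_def)
  moreover show "tri_rel D nxt `` {x} = {x, nxt x, nxt (nxt x)}"
    using gen_equiv_class_order3[of D nxt x] N x by (simp add: tri_rel_eq_gen_equiv)
  ultimately show "orbit D (f_map nxt) x = tri_rel D nxt `` {x}"
    by auto
qed

lemma g_orbit_eq_puncture:
  assumes T: "ideal_triangulation D nxt opp" and x: "x \<in> D"
  shows "orbit D (g_map nxt opp) x = puncture_of D nxt opp x"
proof -
  note N = ideal_triangulation_nxt[OF T] and O = ideal_triangulation_opp[OF T]
  have "bij_betw (g_map nxt opp) D D"
    by (rule bij_betw_byWitness[where f' = "\<lambda>y. opp (nxt y)"]) (use N O in \<open>auto simp: g_map_def\<close>)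
  then show ?thesis
    using orbit_eq_gen_equiv_class[OF _ x] by (simp add: puncture_of_eq_gen_equiv_class)
qed

lemma incident_count_puncture_of:
  assumes T: "ideal_triangulation D nxt opp" and x: "x \<in> D"
  shows "incident_count D nxt opp (puncture_of D nxt opp x) = card (puncture_of D nxt opp x)"
proof -
  note N = ideal_triangulation_nxt[OF T] and O = ideal_triangulation_opp[OF T]
  have "g_map nxt opp ` D \<subseteq> D"
    using N O by (auto simp: g_map_def)
  then show ?thesis
    using gen_equiv_fiber_eq_class[OF _ x]
    by (simp add: incident_count_def puncture_of_eq_gen_equiv_class)
qed

theorem lemma2p3:
  fixes D :: "'d set" and nxt opp :: "'d \<Rightarrow> 'd"
  assumes T: "ideal_triangulation D nxt opp"
    and deg: "\<forall>p \<in> punctures D nxt opp. incident_count D nxt opp p \<ge> 3"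
  shows "(\<forall>\<alpha> \<in> Q1 D. card (orbit D (f_map nxt) \<alpha>) = 3)
       \<and> (\<exists>\<phi>. bij_betw \<phi> (orbit D (f_map nxt) ` Q1 D) (triangles D nxt)
              \<and> (\<forall>\<alpha> \<in> Q1 D. \<alpha> \<in> \<phi> (orbit D (f_map nxt) \<alpha>)))
       \<and> (\<forall>\<alpha> \<in> Q1 D. card (orbit D (g_map nxt opp) \<alpha>) \<ge> 3)
       \<and> (\<exists>\<psi>. bij_betw \<psi> (orbit D (g_map nxt opp) ` Q1 D) (punctures D nxt opp)
              \<and> (\<forall>\<alpha> \<in> Q1 D. \<psi> (orbit D (g_map nxt opp) \<alpha>) = puncture_of D nxt opp \<alpha>))"
proof (intro conjI ballI exI)
  note f_orbit = f_orbit_eq_triangle[OF T] and g_orbit = g_orbit_eq_puncture[OF T]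
  show "card (orbit D (f_map nxt) \<alpha>) = 3" if "\<alpha> \<in> Q1 D" for \<alpha>
    using that f_orbit card_order3_orbit[of nxt \<alpha>] ideal_triangulation_nxt[OF T]
    by (simp add: Q1_def)
  show "bij_betw id (orbit D (f_map nxt) ` Q1 D) (triangles D nxt)"
    using f_orbit(1) by (simp add: Q1_def triangles_def)
  show "\<alpha> \<in> id (orbit D (f_map nxt) \<alpha>)" if "\<alpha> \<in> Q1 D" for \<alpha>
    using that f_orbit by (simp add: Q1_def)
  show "card (orbit D (g_map nxt opp) \<alpha>) \<ge> 3" if "\<alpha> \<in> Q1 D" for \<alpha>
    using that deg g_orbit incident_count_puncture_of[OF T] by (simp add: Q1_def punctures_def)
  show "bij_betw id (orbit D (g_map nxt opp) ` Q1 D) (punctures D nxt opp)"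
    using g_orbit by (simp add: Q1_def punctures_def)
  show "id (orbit D (g_map nxt opp) \<alpha>) = puncture_of D nxt opp \<alpha>" if "\<alpha> \<in> Q1 D" for \<alpha>
    using that g_orbit by (simp add: Q1_def)
qed

end
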